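(* Let $D,W,V,K$ be positive integers, $M:=VK$, and let $\mathcal{D}\in\mathbb{R}^{W\times M}$ with $\mathrm{rank}(\mathcal{D})=D$. Let $\mathcal{D}_\square$ be a $D\times D$ submatrix of $\mathcal{D}$ with $\mathrm{rank}(\mathcal{D}_\square)=D$, with row index set $I\subseteq\{1,\dots,W\}$ and column index set $L\subseteq\{1,\dots,M\}$. Fix $\sharp\in\{\mathrm{st},\mathrm{m}\}$, let $\bar\sharp$ denote the other element of $\{\mathrm{st},\mathrm{m}\}$, and let $\theta(1),\dots,\theta(J)$ be index pairs in $\{1,\dots,W\}^{\times2}$ if $\sharp=\mathrm{st}$, resp. in $\{1,\dots,M\}^{\times2}$ if $\sharp=\mathrm{m}$, together with real numbers $c_1,\dots,c_J$. Call $P'=(P'_{\mathrm{st}}\,|\,P'_{\mathrm{m}})$ with $P'_{\mathrm{st}}\in\mathbb{R}^{D\times W}$, $P'_{\mathrm{m}}\in\mathbb{R}^{D\times M}$ compatible if $(P'_{\mathrm{st}})^TP'_{\mathrm{m}}=\mathcal{D}$ and $\bigl((P'_\sharp)^TP'_\sharp\bigr)_{\theta(j)}=c_j$ for all $j=1,\dots,J$. Let $P^{(0)}_{\mathrm{st}}\in\mathbb{R}^{D\times W}$, $P^{(0)}_{\mathrm{m}}\in\mathbb{R}^{D\times M}$ satisfy $(P^{(0)}_{\mathrm{st}})^TP^{(0)}_{\mathrm{m}}=\mathcal{D}$, let $P=(P_{\mathrm{st}}\,|\,P_{\mathrm{m}})$ be compatible, and let $A\in GL(\mathbb{R}^D)$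 satisfy $P_{\mathrm{st}}=A^{-T}P^{(0)}_{\mathrm{st}}$ and $P_{\mathrm{m}}=AP^{(0)}_{\mathrm{m}}$. Let $R^{(0)}_{\mathrm{st}}\in\mathbb{R}^{D\times D}$ be the submatrix of $P^{(0)}_{\mathrm{st}}$ formed by the columns with indices in $I$, and $R^{(0)}_{\mathrm{m}}\in\mathbb{R}^{D\times D}$ the submatrix of $P^{(0)}_{\mathrm{m}}$ formed by the columns with indices in $L$ (so $(R^{(0)}_{\mathrm{st}})^TR^{(0)}_{\mathrm{m}}=\mathcal{D}_\square$). For $j=1,\dots,J$, writing $\theta(j)=(\theta(j)_1,\theta(j)_2)$ and $\vec p_i$ for the $i$-th column of $P^{(0)}_\sharp$, set $$B_j:=\tfrac12\bigl(\vec p_{\theta(j)_1}\vec p_{\theta(j)_2}^{\,T}+\vec p_{\theta(j)_2}\vec p_{\theta(j)_1}^{\,T}\bigr).$$ Then $A^TA$ is uniquely determined (i.e. $A'^TA'=A^TA$ for every $A'\in GL(\mathbb{R}^D)$ such that $(A'^{-T}P^{(0)}_{\mathrm{st}}\,|\,A'P^{(0)}_{\mathrm{m}})$ is compatible) if and only if $$\mathrm{rank}\Bigl(\mathrm{vec}\bigl(R^{(0)}_{\bar\sharp}B_1(R^{(0)}_{\bar\sharp})^T\bigr)\Bigm|\cdots\Bigm|\mathrm{vec}\bigl(R^{(0)}_{\bar\sharp}B_J(R^{(0)}_{\bar\sharp})^T\bigr)\Bigr)=\tfrac12D(D+1).$$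
   Context: For a matrix $X$, $\mathrm{vec}(X)$ denotes the column vector obtained by stacking the columns of $X$ on top of each other. $GL(\mathbb{R}^D)$ is the group of invertible real $D\times D$ matrices, and $A^{-T}=(A^{-1})^T$. *)

theory Defs
  imports "Jordan_Normal_Form.DL_Rank_Submatrix"
begin

datatype sharp = St | Mm

fun other :: "sharp \<Rightarrow> sharp" where
  "other St = Mm"
| "other Mm = St"

fun sel :: "sharp \<Rightarrow> 'a \<Rightarrow> 'a \<Rightarrow> 'a" where
  "sel St x y = x"
| "sel Mm x y = y"

definition inv_mat :: "real mat \<Rightarrow> real mat" where
  "inv_mat A = (THE B. inverts_mat A B \<and> inverts_mat B A)"

definition vectorize :: "'a mat \<Rightarrow> 'a vec" where
  "vectorize X = vec (dim_row X * dim_col X) (\<lambda>k. X $$ (k mod dim_row X, k div dim_row X))"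

definition outer :: "'a :: semiring_0 vec \<Rightarrow> 'a vec \<Rightarrow> 'a mat" where
  "outer u v = mat (dim_vec u) (dim_vec v) (\<lambda>(i,j). u $ i * v $ j)"

text \<open>Compatibility of (P'_st | P'_m); indices are 0-based.\<close>
definition compatible ::
  "nat \<Rightarrow> nat \<Rightarrow> nat \<Rightarrow> real mat \<Rightarrow> sharp \<Rightarrow> nat \<Rightarrow> (nat \<Rightarrow> nat \<times> nat) \<Rightarrow> (nat \<Rightarrow> real)
   \<Rightarrow> real mat \<Rightarrow> real mat \<Rightarrow> bool" where
  "compatible D W M Dm s J \<theta> c Pst Pm \<longleftrightarrow>
     Pst \<in> carrier_mat D W \<and> Pm \<in> carrier_mat D M \<and>
     transpose_mat Pst * Pm = Dm \<and>
     (\<forall>j<J. (transpose_mat (sel s Pst Pm) * sel s Pst Pm) $$ \<theta> j = c j)"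

end

theory Submission
  imports Defs "Jordan_Normal_Form.Gram_Schmidt"
begin

text \<open>
  Compatibility only involves the factor \<open>F\<close> acting on the \<open>\<sharp>\<close>-block (\<open>F = A\<^sup>-\<^sup>T\<close> for
  \<open>st\<close>, \<open>F = A\<close> for \<open>m\<close>), and only linearly through its Gram matrix \<open>G = F\<^sup>T F\<close>: writing
  \<open>p\<^sub>j, q\<^sub>j\<close> for the columns of \<open>P\<^sup>(\<^sup>0\<^sup>)\<^sub>\<sharp>\<close> indexed by \<open>\<theta>(j)\<close>, the constraints read
  \<open>p\<^sub>j\<^sup>T G q\<^sub>j = c\<^sub>j\<close>. The Gram matrix determines \<open>A\<^sup>T A\<close>, and every positive definite matrix is
  a Gram matrix (Gram--Schmidt for the inner product it defines). As \<open>G + \<epsilon> X\<close> stays positive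
  definite for small \<open>\<epsilon>\<close>, \<open>A\<^sup>T A\<close> is unique iff no nonzero symmetric \<open>X\<close> has
  \<open>p\<^sub>j\<^sup>T X q\<^sub>j = 0\<close> for all \<open>j\<close>.

  Since the square submatrix of \<open>\<D>\<close> is invertible, so is the matrix \<open>R\<close> of the other block;
  hence \<open>Z \<mapsto> R\<^sup>T Z R\<close> permutes the symmetric matrices, and
  \<open>vec(R B\<^sub>j R\<^sup>T) \<bullet> vec Z = p\<^sub>j\<^sup>T (R\<^sup>T Z R) q\<^sub>j\<close>. So the condition says that no nonzero
  vectorised symmetric matrix is orthogonal to all \<open>vec(R B\<^sub>j R\<^sup>T)\<close>, i.e. that these span the
  \<open>D(D+1)/2\<close>-dimensional space of vectorised symmetric matrices.
\<close>

lemma inverts_mat_carrier: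
  assumes A: "A \<in> carrier_mat n n" and AB: "inverts_mat A B" and BA: "inverts_mat B A"
  shows "B \<in> carrier_mat n n"
proof -
  have "A * B = 1\<^sub>m n" "B * A = 1\<^sub>m (dim_row B)"
    using AB BA A unfolding inverts_mat_def by auto
  from arg_cong[OF this(1), of dim_col] arg_cong[OF this(2), of dim_col] A
  show ?thesis by auto
qed

lemma right_inverse_imp_inv_mat:
  assumes A: "A \<in> carrier_mat n n" and B: "B \<in> carrier_mat n n" and AB: "A * B = 1\<^sub>m n"
  shows "invertible_mat A" "inv_mat A = B"
proof -
  have BA: "B * A = 1\<^sub>m n" by (rule mat_mult_left_right_inverse[OF A B AB])
  have inverts: "inverts_mat A B \<and> inverts_mat B A"
    using A B AB BA unfolding inverts_mat_def by auto
  then show "invertible_mat A" using A unfolding invertible_mat_def by auto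
  show "inv_mat A = B" unfolding inv_mat_def
  proof (rule the_equality)
    show "inverts_mat A B \<and> inverts_mat B A" by (rule inverts)
    fix B' assume B': "inverts_mat A B' \<and> inverts_mat B' A"
    then have B'c: "B' \<in> carrier_mat n n" by (intro inverts_mat_carrier[OF A]) auto
    have "B' = B' * (A * B)" using B'c by (simp add: AB)
    also have "\<dots> = (B' * A) * B" using A B B'c by (simp add: assoc_mult_mat)
    also have "\<dots> = B" using B' A B B'c by (simp add: inverts_mat_def)
    finally show "B' = B" .
  qed
qed

lemma invertible_inv_mat:
  assumes A: "A \<in> carrier_mat n n" and inv: "invertible_mat A"
  shows "inv_mat A \<in> carrier_mat n n" "A * inv_mat A = 1\<^sub>m n" "inv_mat A * A = 1\<^sub>m n"
proof -
  obtain B where AB: "inverts_mat A B" "inverts_mat B A"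
    using inv unfolding invertible_mat_def by auto
  have B: "B \<in> carrier_mat n n" by (rule inverts_mat_carrier[OF A AB])
  have "A * B = 1\<^sub>m n" using AB A unfolding inverts_mat_def by auto
  with right_inverse_imp_inv_mat[OF A B] mat_mult_left_right_inverse[OF A B]
  show "inv_mat A \<in> carrier_mat n n" "A * inv_mat A = 1\<^sub>m n" "inv_mat A * A = 1\<^sub>m n"
    using B by auto
qed

lemma invertible_mat_iff_det:
  assumes A: "(A :: real mat) \<in> carrier_mat n n"
  shows "invertible_mat A \<longleftrightarrow> det A \<noteq> 0"
proof
  assume "invertible_mat A"
  from det_mult[OF A invertible_inv_mat(1)[OF A this]] invertible_inv_mat(2)[OF A this]
  show "det A \<noteq> 0" by auto
next
  assume "det A \<noteq> 0"
  then obtain B where "B \<in> carrier_mat n n" "A * B = 1\<^sub>m n"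
    using det_non_zero_imp_unit[OF A, of undefined] unfolding Units_def ring_mat_def by auto
  then show "invertible_mat A" using right_inverse_imp_inv_mat[OF A] by auto
qed

lemma invertible_mult_mat:
  assumes "(A :: real mat) \<in> carrier_mat n n" "B \<in> carrier_mat n n"
    and "invertible_mat A" "invertible_mat B"
  shows "invertible_mat (A * B)"
  using assms by (subst invertible_mat_iff_det[of _ n]) (auto simp: invertible_mat_iff_det det_mult)

lemma invertible_transpose_mat:
  assumes "(A :: real mat) \<in> carrier_mat n n" "invertible_mat A"
  shows "invertible_mat (transpose_mat A)"
  using assms by (subst invertible_mat_iff_det[of _ n]) (auto simp: invertible_mat_iff_det
      det_transpose)

lemma inv_mat_transpose:
  assumes A: "A \<in> carrier_mat n n" and inv: "invertible_mat A"
  shows "inv_mat (transpose_mat A) = transpose_mat (inv_mat A)"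
proof -
  note Ai = invertible_inv_mat[OF A inv]
  have "transpose_mat A * transpose_mat (inv_mat A) = transpose_mat (inv_mat A * A)"
    using A Ai(1) by (simp add: transpose_mult)
  then show ?thesis using A Ai by (intro right_inverse_imp_inv_mat(2)) auto
qed

lemma inv_mat_inv_mat:
  assumes A: "A \<in> carrier_mat n n" and inv: "invertible_mat A"
  shows "invertible_mat (inv_mat A)" "inv_mat (inv_mat A) = A"
  using right_inverse_imp_inv_mat[OF invertible_inv_mat(1)[OF A inv] A invertible_inv_mat(3)[OF A inv]]
  by auto

lemma congruence_cancel:
  assumes A: "(A :: real mat) \<in> carrier_mat n n" and B: "B \<in> carrier_mat n n"
    and X: "X \<in> carrier_mat n n"
    and AB: "A * B = 1\<^sub>m n"
  shows "transpose_mat B * (transpose_mat A * X * A) * B = X"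
proof -
  have BA: "transpose_mat B * transpose_mat A = 1\<^sub>m n"
    using transpose_mult[OF A B] AB by simp
  have "transpose_mat B * (transpose_mat A * X * A) * B
      = (transpose_mat B * transpose_mat A) * X * (A * B)"
    using A B X by (simp add: assoc_mult_mat[of _ n n _ n _ n])
  then show ?thesis using AB BA X by simp
qed

lemma transpose_congruence:
  assumes A: "(A :: real mat) \<in> carrier_mat n n" and X: "X \<in> carrier_mat n n"
  shows "transpose_mat (transpose_mat A * X * A) = transpose_mat A * transpose_mat X * A"
proof -
  have "transpose_mat (transpose_mat A * X * A) = transpose_mat A * (transpose_mat X * A)"
    using A X by (simp add: transpose_mult[of _ n n _ n])
  then show ?thesis using A X by (simp add: assoc_mult_mat[of _ n n _ n _ n])
qed

lemma symmetric_mat_index: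
  assumes "X \<in> carrier_mat n n" "transpose_mat X = X" "i < n" "j < n"
  shows "X $$ (j,i) = X $$ (i,j)"
proof -
  have "X $$ (j,i) = transpose_mat X $$ (i,j)" using assms(1,3,4) by simp
  then show ?thesis using assms(2) by simp
qed

section \<open>Positive definite matrices are Gram matrices\<close>

text \<open>Coordinate vectors are functions \<open>nat \<Rightarrow> real\<close>, of which only the values below
  \<open>n\<close> matter; this keeps the Gram--Schmidt recursion below free of dimension bookkeeping.\<close>

definition bilinear_form :: "nat \<Rightarrow> real mat \<Rightarrow> (nat \<Rightarrow> real) \<Rightarrow> (nat \<Rightarrow> real) \<Rightarrow> real" where
  "bilinear_form n M u v = (\<Sum>p<n. \<Sum>q<n. u p * M $$ (p,q) * v q)"

definition pos_definite :: "nat \<Rightarrow> real mat \<Rightarrow> bool" where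
  "pos_definite n M \<longleftrightarrow> (\<forall>x. (\<exists>p<n. x p \<noteq> 0) \<longrightarrow> 0 < bilinear_form n M x x)"

lemma bilinear_form_sym:
  assumes M: "M \<in> carrier_mat n n" and sym: "transpose_mat M = M"
  shows "bilinear_form n M u v = bilinear_form n M v u"
proof -
  have "bilinear_form n M u v = (\<Sum>q<n. \<Sum>p<n. u p * M $$ (p,q) * v q)"
    unfolding bilinear_form_def by (rule sum.swap)
  also have "\<dots> = bilinear_form n M v u"
    unfolding bilinear_form_def
    by (intro sum.cong refl) (simp add: symmetric_mat_index[OF M sym] mult_ac)
  finally show ?thesis .
qed

lemma bilinear_form_diff_sum_right:
  assumes "finite A"
  shows "bilinear_form n M u (\<lambda>q. f q - (\<Sum>i\<in>A. c i * g i q))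
       = bilinear_form n M u f - (\<Sum>i\<in>A. c i * bilinear_form n M u (g i))"
proof -
  have "bilinear_form n M u (\<lambda>q. f q - (\<Sum>i\<in>A. c i * g i q))
      = bilinear_form n M u f - (\<Sum>p<n. \<Sum>q<n. \<Sum>i\<in>A. c i * (u p * M $$ (p,q) * g i q))"
    unfolding bilinear_form_def
    by (simp add: right_diff_distrib sum_subtractf sum_distrib_left mult_ac)
  also have "(\<Sum>p<n. \<Sum>q<n. \<Sum>i\<in>A. c i * (u p * M $$ (p,q) * g i q))
           = (\<Sum>i\<in>A. c i * bilinear_form n M u (g i))"
    unfolding bilinear_form_def sum_distrib_left by (simp add: sum.swap[of _ A])
  finally show ?thesis .
qed

lemma congruence_index:
  assumes A: "A \<in> carrier_mat n n" and M: "M \<in> carrier_mat n n" and k: "k < n" and l: "l < n"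
  shows "(transpose_mat A * M * A) $$ (k,l) = bilinear_form n M (\<lambda>p. A $$ (p,k)) (\<lambda>q. A $$ (q,l))"
  using A M k l by (simp add: scalar_prod_def lessThan_atLeast0 bilinear_form_def
      sum_distrib_left mult_ac)

fun gram_schmidt_vec :: "nat \<Rightarrow> real mat \<Rightarrow> nat \<Rightarrow> nat \<Rightarrow> real" where
  "gram_schmidt_vec n M k j = (if j = k then 1 else 0) -
     (\<Sum>i<k. bilinear_form n M (\<lambda>q. if q = k then 1 else 0) (gram_schmidt_vec n M i) /
             bilinear_form n M (gram_schmidt_vec n M i) (gram_schmidt_vec n M i) *
                 gram_schmidt_vec n M i j)"

declare gram_schmidt_vec.simps [simp del]

locale pos_definite_mat =
  fixes n :: nat and M :: "real mat"
  assumes M: "M \<in> carrier_mat n n" and sym: "transpose_mat M = M" and pd: "pos_definite n M"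
begin

abbreviation b :: "nat \<Rightarrow> nat \<Rightarrow> real" where "b \<equiv> gram_schmidt_vec n M"

abbreviation d :: "nat \<Rightarrow> real" where "d k \<equiv> bilinear_form n M (b k) (b k)"

lemma b_unfold: "b k = (\<lambda>j. (if j = k then 1 else 0) -
    (\<Sum>i<k. bilinear_form n M (\<lambda>q. if q = k then 1 else 0) (b i) / d i * b i j))"
  by (rule ext, subst gram_schmidt_vec.simps) simp

lemma gram_schmidt_vec_orthogonal:
  "k < n \<Longrightarrow>
    (\<forall>j>k. b k j = 0) \<and> b k k = 1 \<and> (\<forall>i<k. bilinear_form n M (b i) (b k) = 0) \<and> 0 < d k"
proof (induction k rule: less_induct)
  case (less k)
  then have IH: "\<And>i. i < k \<Longrightarrow>
      (\<forall>j>i. b i j = 0) \<and> b i i = 1 \<and> (\<forall>l<i. bilinear_form n M (b l) (b i) = 0) \<and> 0 < d i"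
    by auto
  have upper: "\<forall>j>k. b k j = 0"
    using IH by (subst gram_schmidt_vec.simps) auto
  have diag: "b k k = 1"
    using IH by (subst gram_schmidt_vec.simps) auto
  have orth_below: "bilinear_form n M (b i) (b l) = 0" if "i < k" "l < k" "i \<noteq> l" for i l
    using that IH bilinear_form_sym[OF M sym, of "b l" "b i"] by (cases "i < l") auto
  have orth: "\<forall>i<k. bilinear_form n M (b i) (b k) = 0"
  proof (intro allI impI)
    fix i assume i: "i < k"
    let ?e = "\<lambda>q. if q = k then 1 else (0::real)"
    have "bilinear_form n M (b i) (b k)
        = bilinear_form n M (b i) ?e
          - (\<Sum>l<k. bilinear_form n M ?e (b l) / d l * bilinear_form n M (b i) (b l))"
      by (subst b_unfold[of k], rule bilinear_form_diff_sum_right) simp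
    also have "(\<Sum>l<k. bilinear_form n M ?e (b l) / d l * bilinear_form n M (b i) (b l))
             = bilinear_form n M ?e (b i)"
      using i IH[OF i] orth_below[OF i] by (simp add: sum.remove[of _ i] sum.neutral)
    finally show "bilinear_form n M (b i) (b k) = 0"
      using bilinear_form_sym[OF M sym, of "b i" ?e] by simp
  qed
  have "0 < d k"
    using pd diag less.prems unfolding pos_definite_def by (metis zero_neq_one)
  with upper diag orth show ?case by auto
qed

definition gs_mat :: "real mat" where "gs_mat = mat n n (\<lambda>(p,k). b k p / sqrt (d k))"

lemma gs_mat_carrier: "gs_mat \<in> carrier_mat n n"
  unfolding gs_mat_def by simp

lemma congruence_gs_mat: "transpose_mat gs_mat * M * gs_mat = 1\<^sub>m n"
proof (rule eq_matI)
  fix k l assume "k < dim_row (1\<^sub>m n :: real mat)" "l < dim_col (1\<^sub>m n :: real mat)"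
  then have k: "k < n" and l: "l < n" by auto
  have "(transpose_mat gs_mat * M * gs_mat) $$ (k,l)
      = bilinear_form n M (\<lambda>p. gs_mat $$ (p,k)) (\<lambda>q. gs_mat $$ (q,l))"
    by (rule congruence_index[OF gs_mat_carrier M k l])
  also have "\<dots> = bilinear_form n M (b k) (b l) / (sqrt (d k) * sqrt (d l))"
    using k l unfolding bilinear_form_def gs_mat_def by (simp add: sum_divide_distrib)
  also have "\<dots> = (1\<^sub>m n :: real mat) $$ (k,l)"
    using gram_schmidt_vec_orthogonal[OF k] gram_schmidt_vec_orthogonal[OF l] k l
      bilinear_form_sym[OF M sym, of "b k" "b l"]
    by (cases k l rule: linorder_cases) (auto simp: real_sqrt_mult[symmetric])
  finally show "(transpose_mat gs_mat * M * gs_mat) $$ (k,l) = (1\<^sub>m n :: real mat) $$ (k,l)" .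
qed (use M gs_mat_carrier in auto)

lemma invertible_gs_mat: "invertible_mat gs_mat"
proof -
  have "upper_triangular gs_mat"
    using gram_schmidt_vec_orthogonal unfolding upper_triangular_def gs_mat_def by auto
  then have "det gs_mat = prod_list (diag_mat gs_mat)"
    by (rule det_upper_triangular[OF _ gs_mat_carrier])
  moreover have "0 \<notin> set (diag_mat gs_mat)"
    using gram_schmidt_vec_orthogonal by (fastforce simp: diag_mat_def gs_mat_def)
  ultimately show ?thesis
    by (simp add: invertible_mat_iff_det[OF gs_mat_carrier] prod_list_zero_iff)
qed

end

lemma pos_definite_imp_gram:
  assumes M: "M \<in> carrier_mat n n" and sym: "transpose_mat M = M" and pd: "pos_definite n M"
  shows "\<exists>W \<in> carrier_mat n n. invertible_mat W \<and> transpose_mat W * W = M"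
proof -
  interpret pos_definite_mat n M using assms by unfold_locales
  note Q = invertible_inv_mat[OF gs_mat_carrier invertible_gs_mat]
  have "transpose_mat (inv_mat gs_mat) * inv_mat gs_mat
      = transpose_mat (inv_mat gs_mat) * (transpose_mat gs_mat * M * gs_mat) * inv_mat gs_mat"
    using Q(1) by (simp add: congruence_gs_mat)
  also have "\<dots> = M"
    by (rule congruence_cancel[OF gs_mat_carrier Q(1) M Q(2)])
  finally show ?thesis
    using Q(1) inv_mat_inv_mat(1)[OF gs_mat_carrier invertible_gs_mat] by auto
qed

lemma bilinear_form_add_smult:
  assumes "A \<in> carrier_mat n n" "B \<in> carrier_mat n n"
  shows "bilinear_form n (A + e \<cdot>\<^sub>m B) u v = bilinear_form n A u v + e * bilinear_form n B u v"
  using assms unfolding bilinear_form_def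
  by (simp add: sum.distrib sum_distrib_left algebra_simps)

lemma bilinear_form_minus:
  assumes "A \<in> carrier_mat n n" "B \<in> carrier_mat n n"
  shows "bilinear_form n (A - B) u v = bilinear_form n A u v - bilinear_form n B u v"
  using assms unfolding bilinear_form_def
  by (simp add: sum_subtractf algebra_simps)

lemma bilinear_form_one: "bilinear_form n (1\<^sub>m n) u v = (\<Sum>p<n. u p * v p)"
  unfolding bilinear_form_def by (simp add: if_distrib if_distribR sum.If_cases)

lemma scalar_prod_mult_mat_vec_bilinear_form:
  assumes "X \<in> carrier_mat n n" "u \<in> carrier_vec n" "v \<in> carrier_vec n"
  shows "u \<bullet> (X *\<^sub>v v) = bilinear_form n X (($) u) (($) v)"
  using assms unfolding bilinear_form_def
  by (simp add: scalar_prod_def lessThan_atLeast0 sum_distrib_left mult_ac)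

lemma abs_bilinear_form_le:
  "\<bar>bilinear_form n Y x x\<bar> \<le> (\<Sum>p<n. \<Sum>q<n. \<bar>Y $$ (p,q)\<bar>) * (\<Sum>p<n. x p * x p)"
proof -
  let ?S = "\<Sum>p<n. x p * x p"
  have sq_le: "x p * x p \<le> ?S" if "p < n" for p
    using that by (intro member_le_sum) auto
  have prod_le: "\<bar>x p * x q\<bar> \<le> ?S" if "p < n" "q < n" for p q
  proof -
    have "2 * \<bar>x p * x q\<bar> \<le> x p * x p + x q * x q"
      using sum_squares_bound[of "\<bar>x p\<bar>" "\<bar>x q\<bar>"] by (simp add: abs_mult power2_eq_square)
    then show ?thesis using sq_le[OF that(1)] sq_le[OF that(2)] by linarith
  qed
  have entry_le: "\<bar>x p * Y $$ (p,q) * x q\<bar> \<le> \<bar>Y $$ (p,q)\<bar> * ?S" if "p < n" "q < n" for p q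
    using mult_left_mono[OF prod_le[OF that] abs_ge_zero[of "Y $$ (p,q)"]]
    by (simp add: abs_mult mult_ac)
  have "\<bar>bilinear_form n Y x x\<bar> \<le> (\<Sum>p<n. \<Sum>q<n. \<bar>x p * Y $$ (p,q) * x q\<bar>)"
    unfolding bilinear_form_def by (rule order_trans[OF sum_abs sum_mono[OF sum_abs]])
  also have "\<dots> \<le> (\<Sum>p<n. \<Sum>q<n. \<bar>Y $$ (p,q)\<bar> * ?S)"
    using entry_le by (intro sum_mono) auto
  finally show ?thesis by (simp add: sum_distrib_right)
qed

lemma pos_definite_one_plus_smult:
  assumes Y: "Y \<in> carrier_mat n n"
  shows "\<exists>e>0. pos_definite n (1\<^sub>m n + e \<cdot>\<^sub>m Y)"
proof -
  define \<sigma> where "\<sigma> = (\<Sum>p<n. \<Sum>q<n. \<bar>Y $$ (p,q)\<bar>)"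
  have "\<sigma> \<ge> 0" unfolding \<sigma>_def by (intro sum_nonneg) auto
  define e where "e = 1 / (1 + \<sigma>)"
  have e: "0 < e" "e * \<sigma> < 1"
    using \<open>\<sigma> \<ge> 0\<close> unfolding e_def by (auto simp: field_simps)
  have "0 < bilinear_form n (1\<^sub>m n + e \<cdot>\<^sub>m Y) x x" if nonzero: "\<exists>p<n. x p \<noteq> 0" for x
  proof -
    let ?S = "\<Sum>p<n. x p * x p"
    obtain p0 where p0: "p0 < n" "x p0 \<noteq> 0" using nonzero by blast
    then have "0 < x p0 * x p0" using not_real_square_gt_zero by blast
    then have "0 < ?S"
      using p0 by (intro sum_pos2[where i = p0]) auto
    have "e * \<bar>bilinear_form n Y x x\<bar> \<le> e * (\<sigma> * ?S)"
      using abs_bilinear_form_le[of n Y x] e by (simp add: \<sigma>_def)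
    also have "\<dots> < ?S"
      using e \<open>0 < ?S\<close> by (simp add: mult.assoc[symmetric])
    finally have "e * \<bar>bilinear_form n Y x x\<bar> < ?S" .
    moreover have "- (e * bilinear_form n Y x x) \<le> e * \<bar>bilinear_form n Y x x\<bar>"
      using abs_ge_minus_self[of "e * bilinear_form n Y x x"] e(1) by (simp add: abs_mult)
    ultimately have "0 < ?S + e * bilinear_form n Y x x" by linarith
    then show ?thesis
      using Y by (simp add: bilinear_form_add_smult bilinear_form_one)
  qed
  then show ?thesis using e(1) unfolding pos_definite_def by blast
qed

section \<open>Gram matrices under linear constraints\<close>

definition determines_symmetric :: "nat \<Rightarrow> nat \<Rightarrow> (nat \<Rightarrow> real vec) \<Rightarrow> (nat \<Rightarrow> real vec) \<Rightarrow> bool" where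
  "determines_symmetric n J p q \<longleftrightarrow>
     (\<forall>X \<in> carrier_mat n n. transpose_mat X = X \<longrightarrow> (\<forall>j<J. p j \<bullet> (X *\<^sub>v q j) = 0) \<longrightarrow> X = 0\<^sub>m n n)"

lemma transpose_gram:
  "(C :: real mat) \<in> carrier_mat n n \<Longrightarrow> transpose_mat (transpose_mat C * C) = transpose_mat C * C"
  by (simp add: transpose_mult[of _ n n _ n])

lemma gram_mult_congruence:
  assumes V: "(V :: real mat) \<in> carrier_mat n n" and C: "C \<in> carrier_mat n n"
  shows "transpose_mat (V * C) * (V * C) = transpose_mat C * (transpose_mat V * V) * C"
  using V C by (simp add: transpose_mult[OF V C] assoc_mult_mat[of _ n n _ n _ n])

lemma gram_mult_index:
  assumes F: "(F :: real mat) \<in> carrier_mat n n" and P: "P \<in> carrier_mat n m" and ab: "a < m" "b < m"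
  shows "(transpose_mat (F * P) * (F * P)) $$ (a,b) = col P a \<bullet> ((transpose_mat F * F) *\<^sub>v col P b)"
proof -
  have cols: "col P a \<in> carrier_vec n" "col P b \<in> carrier_vec n" using P ab by auto
  have "(transpose_mat (F * P) * (F * P)) $$ (a,b) = col (F * P) a \<bullet> col (F * P) b"
    using F P ab by simp
  also have "\<dots> = (F *\<^sub>v col P a) \<bullet> (F *\<^sub>v col P b)"
    by (simp only: col_mult2[OF F P ab(1)] col_mult2[OF F P ab(2)])
  also have "\<dots> = (F *\<^sub>v col P b) \<bullet> (F *\<^sub>v col P a)"
    by (rule comm_scalar_prod[of _ n]) (use F cols in auto)
  also have "\<dots> = (transpose_mat F *\<^sub>v (F *\<^sub>v col P b)) \<bullet> col P a"
    by (rule transpose_vec_mult_scalar[OF F cols(1), symmetric]) (use F cols in auto)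
  also have "\<dots> = col P a \<bullet> (transpose_mat F *\<^sub>v (F *\<^sub>v col P b))"
    by (rule comm_scalar_prod[of _ n]) (use F cols in auto)
  also have "\<dots> = col P a \<bullet> ((transpose_mat F * F) *\<^sub>v col P b)"
    using F cols by (simp add: assoc_mult_mat_vec)
  finally show ?thesis .
qed

lemma minus_mat_eq_0_iff:
  assumes "(A :: real mat) \<in> carrier_mat n m" "B \<in> carrier_mat n m"
  shows "A - B = 0\<^sub>m n m \<longleftrightarrow> A = B"
proof
  assume "A - B = 0\<^sub>m n m"
  then have "(A - B) $$ (i,j) = 0" if "i < n" "j < m" for i j using that by simp
  then show "A = B" using assms by (intro eq_matI) auto
qed (use assms in simp)

lemma add_smult_eq_self_imp_0:
  assumes "(G :: real mat) \<in> carrier_mat n m" "X \<in> carrier_mat n m"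
    and "e \<noteq> 0" "G + e \<cdot>\<^sub>m X = G"
  shows "X = 0\<^sub>m n m"
proof -
  have "(G + e \<cdot>\<^sub>m X) $$ (i,j) = G $$ (i,j)" if "i < n" "j < m" for i j
    using assms(4) by simp
  then have "X $$ (i,j) = 0" if "i < n" "j < m" for i j
    using that assms(1-3) by simp
  then show ?thesis using assms(1-3) by (intro eq_matI) auto
qed

lemma gram_add_smult_exists:
  assumes C: "(C :: real mat) \<in> carrier_mat n n" "invertible_mat C"
    and X: "X \<in> carrier_mat n n" "transpose_mat X = X"
  obtains e W where "0 < e" "W \<in> carrier_mat n n" "invertible_mat W"
    "transpose_mat W * W = transpose_mat C * C + e \<cdot>\<^sub>m X"
proof -
  note Ci = invertible_inv_mat[OF C]
  define Y where "Y = transpose_mat (inv_mat C) * X * inv_mat C"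
  have Y: "Y \<in> carrier_mat n n" using X Ci(1) by (simp add: Y_def)
  have Ysym: "transpose_mat Y = Y"
    using transpose_congruence[OF Ci(1) X(1)] X(2) by (simp add: Y_def)
  obtain e where e: "0 < e" and pd: "pos_definite n (1\<^sub>m n + e \<cdot>\<^sub>m Y)"
    using pos_definite_one_plus_smult[OF Y] by blast
  have "transpose_mat (1\<^sub>m n + e \<cdot>\<^sub>m Y) = 1\<^sub>m n + e \<cdot>\<^sub>m Y"
    using Y Ysym by (intro eq_matI) (auto simp: symmetric_mat_index[OF Y Ysym])
  then obtain V where V: "V \<in> carrier_mat n n" "invertible_mat V"
    and VV: "transpose_mat V * V = 1\<^sub>m n + e \<cdot>\<^sub>m Y"
    using pos_definite_imp_gram[OF _ _ pd] Y by auto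
  have CYC: "transpose_mat C * Y * C = X"
    unfolding Y_def by (rule congruence_cancel[OF Ci(1) C(1) X(1) Ci(3)])
  have "(1\<^sub>m n + e \<cdot>\<^sub>m Y) * C = C + e \<cdot>\<^sub>m (Y * C)"
    using Y C(1) by (simp add: add_mult_distrib_mat[of _ n n] mult_smult_assoc_mat)
  then have "transpose_mat (V * C) * (V * C) = transpose_mat C * C + e \<cdot>\<^sub>m X"
    using C(1) Y CYC by (simp add: gram_mult_congruence[OF V(1) C(1)] VV
        mult_add_distrib_mat[of _ n n] mult_smult_distrib[of _ n n _ n]
        assoc_mult_mat[of _ n n _ n _ n])
  moreover have "V * C \<in> carrier_mat n n" "invertible_mat (V * C)"
    using V C by (auto intro: invertible_mult_mat)
  ultimately show ?thesis using that e by blast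
qed

lemma unique_gram_iff_determines_symmetric:
  assumes C: "C \<in> carrier_mat n n" "invertible_mat C"
    and pq: "\<And>j. j < J \<Longrightarrow> p j \<in> carrier_vec n \<and> q j \<in> carrier_vec n"
  shows "(\<forall>W \<in> carrier_mat n n. invertible_mat W \<longrightarrow>
            (\<forall>j<J. p j \<bullet> ((transpose_mat W * W) *\<^sub>v q j) = p j \<bullet> ((transpose_mat C * C) *\<^sub>v q j)) \<longrightarrow>
            transpose_mat W * W = transpose_mat C * C)
         \<longleftrightarrow> determines_symmetric n J p q"
  (is "?unique \<longleftrightarrow> _")
proof -
  let ?G = "transpose_mat C * C"
  have G: "?G \<in> carrier_mat n n" using C by simp
  have as_bilinear_form: "p j \<bullet> (X *\<^sub>v q j) = bilinear_form n X (($) (p j)) (($) (q j))"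
    if "j < J" "X \<in> carrier_mat n n" for j X
    using pq[OF that(1)] that(2) by (simp add: scalar_prod_mult_mat_vec_bilinear_form)
  show ?thesis
  proof
    assume unique: ?unique
    show "determines_symmetric n J p q" unfolding determines_symmetric_def
    proof (intro ballI impI)
      fix X assume X: "X \<in> carrier_mat n n" and sym: "transpose_mat X = X"
        and vanish: "\<forall>j<J. p j \<bullet> (X *\<^sub>v q j) = 0"
      obtain e V where e: "0 < e" and V: "V \<in> carrier_mat n n" "invertible_mat V"
        and VV: "transpose_mat V * V = ?G + e \<cdot>\<^sub>m X"
        using gram_add_smult_exists[OF C X sym] .
      have "transpose_mat V * V = ?G"
      proof (rule unique[rule_format, OF V])
        show "p j \<bullet> ((transpose_mat V * V) *\<^sub>v q j) = p j \<bullet> (?G *\<^sub>v q j)" if "j < J" for j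
          using vanish that G X by (simp add: VV as_bilinear_form bilinear_form_add_smult)
      qed
      then have "?G + e \<cdot>\<^sub>m X = ?G" by (simp only: VV)
      then show "X = 0\<^sub>m n n"
        using e by (intro add_smult_eq_self_imp_0[OF G X]) auto
    qed
  next
    assume det: "determines_symmetric n J p q"
    show ?unique
    proof (intro ballI impI)
      fix W assume W: "W \<in> carrier_mat n n"
        and same: "\<forall>j<J. p j \<bullet> ((transpose_mat W * W) *\<^sub>v q j) = p j \<bullet> (?G *\<^sub>v q j)"
      let ?X = "transpose_mat W * W - ?G"
      have X: "?X \<in> carrier_mat n n" using W G by (intro minus_carrier_mat) auto
      have "transpose_mat ?X = ?X"
        using W C by (simp add: transpose_minus[of _ n n] transpose_gram)
      moreover have "\<forall>j<J. p j \<bullet> (?X *\<^sub>v q j) = 0"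
        using same W G X by (simp add: as_bilinear_form bilinear_form_minus)
      ultimately have "?X = 0\<^sub>m n n"
        using det X unfolding determines_symmetric_def by blast
      then show "transpose_mat W * W = ?G"
        using W G by (simp add: minus_mat_eq_0_iff)
    qed
  qed
qed

section \<open>A rank criterion via orthogonality\<close>

lemma real_cscalar_prod: "(v :: real vec) \<bullet>c w = v \<bullet> w"
  by (simp add: conjugate_id)

lemma minus_vec_eq_0_iff:
  assumes "(u :: real vec) \<in> carrier_vec n" "v \<in> carrier_vec n"
  shows "u - v = 0\<^sub>v n \<longleftrightarrow> u = v"
proof
  assume "u - v = 0\<^sub>v n"
  then have "(u - v) $ i = 0" if "i < n" for i using that by simp
  then show "u = v" using assms by (intro eq_vecI) auto
qed (use assms in simp)

context
  fixes N :: nat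
begin

interpretation V: cof_vec_space N "TYPE(real)" .

lemma lincomb_scalar_prod:
  assumes A: "A \<subseteq> carrier_vec N" "finite A" and z: "z \<in> carrier_vec N"
  shows "V.lincomb a A \<bullet> z = (\<Sum>x\<in>A. a x * (x \<bullet> z))"
proof -
  have "V.lincomb a A \<bullet> z = (\<Sum>k<N. (\<Sum>x\<in>A. a x * x $ k) * z $ k)"
    using z A by (simp add: scalar_prod_def lessThan_atLeast0 V.lincomb_index)
  also have "\<dots> = (\<Sum>x\<in>A. a x * (x \<bullet> z))"
    using z by (simp add: scalar_prod_def lessThan_atLeast0 sum_distrib_left sum_distrib_right
        sum.swap[of _ A] mult.assoc)
  finally show ?thesis .
qed

lemma orthogonal_projection_exists:
  assumes S: "S \<subseteq> carrier_vec N" "finite S" "V.lin_indpt S" and y: "y \<in> carrier_vec N"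
  shows "\<exists>p \<in> V.span S. \<forall>s\<in>S. (y - p) \<bullet> s = 0"
proof -
  obtain ws where ws: "set ws = S" "distinct ws" using finite_distinct_list[OF S(2)] by auto
  define us where "us = gram_schmidt N ws"
  note GS = V.gram_schmidt_result[of ws us, OF _ ws(2) _ us_def, unfolded ws(1), OF S(1) S(3)]
  define U where "U = set us"
  have U: "U \<subseteq> carrier_vec N" "finite U" and span_U: "V.span S = V.span U"
    unfolding U_def using GS by auto
  have orth: "u \<bullet> v = (if u = v then u \<bullet> u else 0)" and nonzero: "u \<bullet> u \<noteq> 0"
    if "u \<in> U" "v \<in> U" for u v
    using that corthogonalD[OF GS(2)] corthogonal_distinct[OF GS(2)]
    unfolding U_def in_set_conv_nth by (auto simp: real_cscalar_prod nth_eq_iff_index_eq)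
  define p where "p = V.lincomb (\<lambda>u. (y \<bullet> u) / (u \<bullet> u)) U"
  have p: "p \<in> carrier_vec N" "p \<in> V.span U"
    unfolding p_def using U V.lincomb_closed by (auto simp: V.span_def class_ring_simps)
  have "(y - p) \<bullet> u = 0" if "u \<in> U" for u
  proof -
    have u: "u \<in> carrier_vec N" using that U by auto
    have "p \<bullet> u = (\<Sum>x\<in>U. (y \<bullet> x) / (x \<bullet> x) * (if x = u then x \<bullet> x else 0))"
      unfolding p_def using lincomb_scalar_prod[OF U u] orth[OF _ that] by simp
    also have "\<dots> = (\<Sum>x\<in>U. if x = u then y \<bullet> u else 0)"
      using nonzero[OF that that] by (intro sum.cong) auto
    also have "\<dots> = y \<bullet> u" using that U by simp
    finally show ?thesis
      using u y p(1) by (simp add: minus_scalar_prod_distrib)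
  qed
  then have "y - p \<in> V.orthogonal_complement (V.span U)"
    unfolding V.in_orthogonal_complement_span[OF U(1)]
    using y p(1) by (auto simp: V.orthogonal_complement_def)
  moreover have "S \<subseteq> V.span U" using span_U V.in_own_span[OF S(1)] by auto
  ultimately show ?thesis
    using p(2) span_U by (auto simp: V.orthogonal_complement_def)
qed

lemma diff_in_span:
  assumes S: "S \<subseteq> carrier_vec N" and u: "u \<in> V.span S" and v: "v \<in> V.span S"
  shows "u - v \<in> V.span S"
proof -
  have "u - v = u + (-1) \<cdot>\<^sub>v v"
    using V.span_closed[OF S u] V.span_closed[OF S v] by (intro eq_vecI) auto
  then show ?thesis
    using V.span_add1[OF S u V.smult_in_span[OF S v]] by (simp add: module_vec_simps)
qed

lemma card_le_if_lin_indpt_subset_span: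
  assumes "finite A" "finite B" "B \<subseteq> carrier_vec N" "V.lin_indpt A" "A \<subseteq> V.span B"
  shows "card A \<le> card B"
  using V.replacement[OF assms] by auto

lemma orthogonal_span:
  assumes S: "S \<subseteq> carrier_vec N" and z: "z \<in> carrier_vec N"
    and orth: "\<forall>s\<in>S. z \<bullet> s = 0" and w: "w \<in> V.span S"
  shows "w \<bullet> z = 0"
proof -
  have "z \<in> V.orthogonal_complement (V.span S)"
    unfolding V.in_orthogonal_complement_span[OF S]
    using z orth by (auto simp: V.orthogonal_complement_def)
  then show ?thesis
    using w V.span_closed[OF S w] z comm_scalar_prod[of w N z]
    by (auto simp: V.orthogonal_complement_def)
qed

lemma maximal_lin_indpt_subset:
  assumes vs: "set vs \<subseteq> carrier_vec N"
  obtains S where "finite S" "S \<subseteq> set vs" "V.lin_indpt S" "set vs \<subseteq> V.span S"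
    "V.rank (mat_of_cols N vs) = card S"
proof -
  obtain S where S: "finite S" "maximal S (\<lambda>T. T \<subseteq> set vs \<and> V.lin_indpt T)"
    using maximal_exists_superset[of "set vs" "\<lambda>T. T \<subseteq> set vs \<and> V.lin_indpt T" "{}"]
    by (auto simp: V.lin_dep_def)
  have rank: "V.rank (mat_of_cols N vs) = card S"
    using V.rank_card_indpt[of "mat_of_cols N vs" "length vs"] S(2) vs
    by (simp add: cols_mat_of_cols)
  have S_vs: "S \<subseteq> set vs" and S_indpt: "V.lin_indpt S" using S(2) unfolding maximal_def by auto
  have S_carrier: "S \<subseteq> carrier_vec N" using S_vs vs by auto
  have "v \<in> V.span S" if v: "v \<in> set vs" for v
  proof (rule ccontr)
    assume "v \<notin> V.span S"
    then have "V.lin_indpt (insert v S)"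
      using V.lin_dep_iff_in_span[OF S_carrier S_indpt] v vs V.in_own_span[OF S_carrier] by auto
    then have "insert v S = S" using S(2) v S_vs unfolding maximal_def by blast
    then show False using \<open>v \<notin> V.span S\<close> V.in_own_span[OF S_carrier] by auto
  qed
  then show ?thesis using that S(1) S_vs S_indpt rank by blast
qed

lemma rank_eq_card_iff_no_orthogonal:
  assumes E: "E \<subseteq> carrier_vec N" "finite E" "V.lin_indpt E" and vs: "set vs \<subseteq> V.span E"
  shows "vec_space.rank N (mat_of_cols N vs) = card E \<longleftrightarrow>
         (\<forall>z \<in> V.span E. (\<forall>v \<in> set vs. v \<bullet> z = 0) \<longrightarrow> z = 0\<^sub>v N)"
proof -
  have vs_carrier: "set vs \<subseteq> carrier_vec N" using vs V.span_closed[OF E(1)] by auto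
  obtain S where S: "finite S" "S \<subseteq> set vs" "V.lin_indpt S" and vs_S: "set vs \<subseteq> V.span S"
    and rank: "V.rank (mat_of_cols N vs) = card S"
    using maximal_lin_indpt_subset[OF vs_carrier] by blast
  have S_carrier: "S \<subseteq> carrier_vec N" and S_E: "S \<subseteq> V.span E" using S(2) vs_carrier vs by auto
  have "card S \<le> card E"
    by (rule card_le_if_lin_indpt_subset_span[OF S(1) E(2,1) S(3) S_E])
  show ?thesis unfolding rank
  proof
    assume card: "card S = card E"
    show "\<forall>z \<in> V.span E. (\<forall>v \<in> set vs. v \<bullet> z = 0) \<longrightarrow> z = 0\<^sub>v N"
    proof (intro ballI impI, rule ccontr)
      fix z assume z: "z \<in> V.span E" and orth: "\<forall>v \<in> set vs. v \<bullet> z = 0" and "z \<noteq> 0\<^sub>v N"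
      have z_carrier: "z \<in> carrier_vec N" using V.span_closed[OF E(1) z] .
      have "\<forall>s\<in>S. z \<bullet> s = 0"
        using orth S(2) S_carrier z_carrier comm_scalar_prod[of _ N z] by (metis subsetD)
      moreover have "z \<bullet> z \<noteq> 0"
        using \<open>z \<noteq> 0\<^sub>v N\<close> conjugate_square_eq_0_vec[OF z_carrier] by (simp add: real_cscalar_prod)
      ultimately have "z \<notin> V.span S" using orthogonal_span[OF S_carrier z_carrier] by blast
      then have "V.lin_indpt (insert z S)" and "z \<notin> S"
        using V.lin_dep_iff_in_span[OF S_carrier S(3) z_carrier] V.in_own_span[OF S_carrier] by auto
      then have "card (insert z S) \<le> card E"
        using S(1) S_E z E by (intro card_le_if_lin_indpt_subset_span) auto
      then show False using card S(1) \<open>z \<notin> S\<close> by simp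
    qed
  next
    assume no_orth: "\<forall>z \<in> V.span E. (\<forall>v \<in> set vs. v \<bullet> z = 0) \<longrightarrow> z = 0\<^sub>v N"
    have "e \<in> V.span S" if e: "e \<in> E" for e
    proof -
      have e_carrier: "e \<in> carrier_vec N" using e E(1) by auto
      obtain p where p: "p \<in> V.span S" "\<forall>s\<in>S. (e - p) \<bullet> s = 0"
        using orthogonal_projection_exists[OF S_carrier S(1,3) e_carrier] by blast
      have p_carrier: "p \<in> carrier_vec N" using V.span_closed[OF S_carrier p(1)] .
      have "\<forall>v \<in> set vs. v \<bullet> (e - p) = 0"
        using orthogonal_span[OF S_carrier _ p(2)] vs_S e_carrier p_carrier by auto
      moreover have "e - p \<in> V.span E"
        using e p(1) V.in_own_span[OF E(1)] V.span_subsetI[OF E(1) S_E]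
        by (intro diff_in_span[OF E(1)]) auto
      ultimately have "e - p = 0\<^sub>v N" using no_orth by blast
      then show "e \<in> V.span S" using p(1) e_carrier p_carrier by (simp add: minus_vec_eq_0_iff)
    qed
    then have "card E \<le> card S"
      by (intro card_le_if_lin_indpt_subset_span[OF E(2) S(1) S_carrier E(3)]) auto
    then show "card S = card E" using \<open>card S \<le> card E\<close> by simp
  qed
qed

end

section \<open>Vectorised symmetric matrices\<close>

text \<open>\<open>vectorize\<close> stores entry \<open>(a, b)\<close> of a \<open>D \<times> D\<close> matrix at index \<open>a + b * D\<close>.\<close>

lemma index_pair_less:
  assumes "a < D" "b < (D :: nat)"
  shows "a + b * D < D * D"
proof -
  have "a + b * D < Suc b * D" using assms by simp
  also have "\<dots> \<le> D * D" using assms by (intro mult_le_mono1) simp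
  finally show ?thesis .
qed

lemma index_pair_eq_iff:
  assumes "a < D" "c < (D :: nat)"
  shows "a + b * D = c + d * D \<longleftrightarrow> a = c \<and> b = d"
proof
  assume eq: "a + b * D = c + d * D"
  have "(a + b * D) mod D = a" "(c + d * D) mod D = c" using assms by auto
  then have "a = c" using eq by metis
  with eq assms show "a = c \<and> b = d" by simp
qed simp

lemma index_pair_mod_div:
  assumes "k < D * (D :: nat)"
  shows "k mod D < D" "k div D < D"
proof -
  have "0 < D" using assms by (cases D) auto
  then show "k mod D < D" by simp
  show "k div D < D" using assms by (simp add: less_mult_imp_div_less)
qed

definition sym_vecs :: "nat \<Rightarrow> real vec set" where
  "sym_vecs D = {z \<in> carrier_vec (D * D). \<forall>a<D. \<forall>b<D. z $ (a + b * D) = z $ (b + a * D)}"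

definition sym_unit :: "nat \<Rightarrow> nat \<Rightarrow> nat \<Rightarrow> real vec" where
  "sym_unit D a b = vec (D * D) (\<lambda>k. if k = a + b * D \<or> k = b + a * D then 1 else 0)"

definition sym_basis :: "nat \<Rightarrow> real vec set" where
  "sym_basis D = (\<lambda>(b, a). sym_unit D a b) ` (SIGMA b:{..<D}. {..b})"

lemma sym_unit_index:
  assumes ab: "a \<le> b" "b < D" and k: "k < D * D"
  shows "sym_unit D a b $ k =
    (if (a, b) = (min (k mod D) (k div D), max (k mod D) (k div D)) then 1 else 0)"
proof -
  note k_bounds = index_pair_mod_div[OF k]
  have "k = a + b * D \<or> k = b + a * D \<longleftrightarrow> (a, b) = (k mod D, k div D) \<or> (b, a) = (k mod D, k div D)"
    using index_pair_eq_iff[of a D "k mod D" b "k div D"]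
      index_pair_eq_iff[of b D "k mod D" a "k div D"]
      ab k_bounds by auto
  also have "\<dots> \<longleftrightarrow> (a, b) = (min (k mod D) (k div D), max (k mod D) (k div D))"
    using ab by (auto simp: min_def max_def)
  finally show ?thesis using k by (simp add: sym_unit_def)
qed

lemma inj_on_sym_unit: "inj_on (\<lambda>(b, a). sym_unit D a b) (SIGMA b:{..<D}. {..b})"
proof (rule inj_onI, clarsimp)
  fix a b a' b' assume ab: "b < D" "a \<le> b" "b' < D" "a' \<le> b'"
    and eq: "sym_unit D a b = sym_unit D a' b'"
  have "a + b * D < D * D" using ab by (intro index_pair_less) auto
  then have "sym_unit D a' b' $ (a + b * D) = 1"
    unfolding eq[symmetric] by (simp add: sym_unit_def)
  then show "b = b' \<and> a = a'"
    using ab \<open>a + b * D < D * D\<close> index_pair_eq_iff[of a D a' b b'] index_pair_eq_iff[of a D b' b a']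
    by (auto simp: sym_unit_def split: if_splits)
qed

lemma card_sym_basis: "card (sym_basis D) = D * (D + 1) div 2"
proof -
  have "2 * (\<Sum>b<D. Suc b) = D * (D + 1)" by (induction D) auto
  then show ?thesis
    unfolding sym_basis_def by (simp add: card_image[OF inj_on_sym_unit] card_SigmaI)
qed

lemma sym_basis_subset: "sym_basis D \<subseteq> sym_vecs D"
  unfolding sym_basis_def sym_vecs_def sym_unit_def
  by (auto simp: index_pair_less index_pair_eq_iff)

context
  fixes D :: nat
begin

interpretation V: cof_vec_space "D * D" "TYPE(real)" .

lemma sym_basis_carrier: "sym_basis D \<subseteq> carrier_vec (D * D)"
  using sym_basis_subset unfolding sym_vecs_def by auto

lemma finite_sym_basis: "finite (sym_basis D)"
  unfolding sym_basis_def by simp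

lemma lin_indpt_sym_basis: "V.lin_indpt (sym_basis D)"
proof
  assume "V.lin_dep (sym_basis D)"
  then obtain A c v where A: "finite A" "A \<subseteq> sym_basis D" "V.lincomb c A = 0\<^sub>v (D * D)"
    and v: "v \<in> A" "c v \<noteq> 0"
    unfolding V.lin_dep_def by (auto simp: class_ring_simps)
  have A_carrier: "A \<subseteq> carrier_vec (D * D)" using A(2) sym_basis_carrier by auto
  obtain a b where ab: "a \<le> b" "b < D" and v_def: "v = sym_unit D a b"
    using v(1) A(2) unfolding sym_basis_def by auto
  define k where "k = a + b * D"
  have k: "k < D * D" "k mod D = a" "k div D = b"
    unfolding k_def using ab index_pair_less[of a D b] by auto
  have "0 = V.lincomb c A $ k" using A(3) k by simp
  also have "\<dots> = (\<Sum>w\<in>A. c w * w $ k)" by (rule V.lincomb_index[OF k(1) A_carrier])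
  also have "\<dots> = (\<Sum>w\<in>A. if w = v then c v else 0)"
  proof (rule sum.cong[OF refl])
    fix w assume "w \<in> A"
    then obtain a' b' where a'b': "a' \<le> b'" "b' < D" and w_def: "w = sym_unit D a' b'"
      using A(2) unfolding sym_basis_def by auto
    show "c w * w $ k = (if w = v then c v else 0)"
    proof (cases "w = v")
      case True
      then show ?thesis using sym_unit_index[OF ab k(1)] ab k(2,3) by (simp add: v_def)
    next
      case False
      then have "(a', b') \<noteq> (a, b)" using w_def v_def by auto
      then show ?thesis using False sym_unit_index[OF a'b' k(1)] ab k(2,3) w_def by auto
    qed
  qed
  also have "\<dots> = c v" using A(1) v(1) by simp
  finally show False using v(2) by simp
qed

lemma sym_vecs_subset_span: "sym_vecs D \<subseteq> V.span (sym_basis D)"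
proof
  fix z assume z: "z \<in> sym_vecs D"
  define P where "P = (SIGMA b:{..<D}. {..b})"
  define f where "f = (\<lambda>(b, a). sym_unit D a b)"
  define c where "c = (\<lambda>w. z $ (case the_inv_into P f w of (b, a) \<Rightarrow> a + b * D))"
  have basis: "sym_basis D = f ` P" unfolding sym_basis_def P_def f_def ..
  have inj: "inj_on f P" unfolding f_def P_def by (rule inj_on_sym_unit)
  have finite_P: "finite P" unfolding P_def by simp
  have "z = V.lincomb c (sym_basis D)"
  proof (rule eq_vecI)
    show dim: "dim_vec z = dim_vec (V.lincomb c (sym_basis D))"
      using z V.lincomb_dim[OF finite_sym_basis sym_basis_carrier] by (simp add: sym_vecs_def)
    fix k assume "k < dim_vec (V.lincomb c (sym_basis D))"
    then have k: "k < D * D" using V.lincomb_dim[OF finite_sym_basis sym_basis_carrier] by simp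
    define p where "p = (max (k mod D) (k div D), min (k mod D) (k div D))"
    have p: "p \<in> P" unfolding p_def P_def using index_pair_mod_div[OF k] by auto
    have "V.lincomb c (sym_basis D) $ k = (\<Sum>w\<in>f ` P. c w * w $ k)"
      using V.lincomb_index[OF k sym_basis_carrier] basis by simp
    also have "\<dots> = (\<Sum>x\<in>P. c (f x) * f x $ k)"
      by (rule sum.reindex[OF inj, unfolded comp_def])
    also have "\<dots> = (\<Sum>x\<in>P. if x = p then c (f p) else 0)"
      unfolding P_def f_def p_def
      by (intro sum.cong refl) (auto simp: sym_unit_index[OF _ _ k] split: if_splits)
    also have "\<dots> = z $ (snd p + fst p * D)"
      using p finite_P by (simp add: c_def the_inv_into_f_f[OF inj p] case_prod_beta)
    also have "\<dots> = z $ k"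
    proof -
      have "z $ (k mod D + k div D * D) = z $ (k div D + k mod D * D)"
        using z index_pair_mod_div[OF k] by (auto simp: sym_vecs_def)
      then show ?thesis
        unfolding p_def by (cases "k mod D \<le> k div D") (simp_all add: min_def max_def)
    qed
    finally show "z $ k = V.lincomb c (sym_basis D) $ k" by simp
  qed
  moreover have "c \<in> sym_basis D \<rightarrow> carrier class_ring" by (simp add: class_ring_simps)
  ultimately show "z \<in> V.span (sym_basis D)"
    unfolding V.span_def using finite_sym_basis by blast
qed

lemma span_sym_basis: "V.span (sym_basis D) = sym_vecs D"
proof
  show "V.span (sym_basis D) \<subseteq> sym_vecs D"
  proof
    fix w assume "w \<in> V.span (sym_basis D)"
    then obtain c A where w: "w = V.lincomb c A" and A: "finite A" "A \<subseteq> sym_basis D"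
      unfolding V.span_def by auto
    have A_sym: "A \<subseteq> sym_vecs D" and A_carrier: "A \<subseteq> carrier_vec (D * D)"
      using A(2) sym_basis_subset sym_basis_carrier by auto
    have "w $ (a + b * D) = w $ (b + a * D)" if "a < D" "b < D" for a b
    proof -
      have "x $ (a + b * D) = x $ (b + a * D)" if "x \<in> A" for x
        using that A_sym \<open>a < D\<close> \<open>b < D\<close> by (auto simp: sym_vecs_def)
      then show ?thesis
        using index_pair_less[OF that] index_pair_less[OF that(2,1)]
        unfolding w by (simp add: V.lincomb_index[OF _ A_carrier])
    qed
    then show "w \<in> sym_vecs D"
      using V.lincomb_closed[OF A_carrier] unfolding sym_vecs_def w
      by (auto simp: class_ring_simps)
  qed
qed (rule sym_vecs_subset_span)

end

definition unvectorize :: "nat \<Rightarrow> real vec \<Rightarrow> real mat" where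
  "unvectorize D z = mat D D (\<lambda>(a, b). z $ (a + b * D))"

definition frobenius_inner :: "nat \<Rightarrow> real mat \<Rightarrow> real mat \<Rightarrow> real" where
  "frobenius_inner D X Y = (\<Sum>a<D. \<Sum>b<D. X $$ (a,b) * Y $$ (a,b))"

definition sym_outer :: "real vec \<Rightarrow> real vec \<Rightarrow> real mat" where
  "sym_outer u v = (1/2) \<cdot>\<^sub>m (outer u v + outer v u)"

lemma sym_outer_carrier_symmetric:
  assumes "u \<in> carrier_vec D" "v \<in> carrier_vec D"
  shows "sym_outer u v \<in> carrier_mat D D" "transpose_mat (sym_outer u v) = sym_outer u v"
  using assms by (auto simp: sym_outer_def outer_def intro!: eq_matI)

lemma vectorize_carrier: "X \<in> carrier_mat D D \<Longrightarrow> vectorize X \<in> carrier_vec (D * D)"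
  unfolding vectorize_def by auto

lemma vectorize_index:
  "X \<in> carrier_mat D D \<Longrightarrow> a < D \<Longrightarrow> b < D \<Longrightarrow> vectorize X $ (a + b * D) = X $$ (a,b)"
  unfolding vectorize_def using index_pair_less[of a D b] by auto

lemma unvectorize_carrier: "unvectorize D z \<in> carrier_mat D D"
  unfolding unvectorize_def by simp

lemma vectorize_unvectorize: "z \<in> carrier_vec (D * D) \<Longrightarrow> vectorize (unvectorize D z) = z"
  unfolding vectorize_def unvectorize_def
  by (intro eq_vecI) (auto simp: index_pair_mod_div)

lemma unvectorize_vectorize: "X \<in> carrier_mat D D \<Longrightarrow> unvectorize D (vectorize X) = X"
  by (intro eq_matI) (auto simp: unvectorize_def vectorize_index)

lemma vectorize_mem_sym_vecs_iff:
  assumes X: "X \<in> carrier_mat D D"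
  shows "vectorize X \<in> sym_vecs D \<longleftrightarrow> transpose_mat X = X"
proof
  assume sym: "vectorize X \<in> sym_vecs D"
  have "X $$ (a,b) = X $$ (b,a)" if "a < D" "b < D" for a b
  proof -
    have "vectorize X $ (a + b * D) = vectorize X $ (b + a * D)"
      using sym that unfolding sym_vecs_def by blast
    then show ?thesis using vectorize_index[OF X] that by simp
  qed
  then show "transpose_mat X = X" using X by (intro eq_matI) auto
next
  assume "transpose_mat X = X"
  then show "vectorize X \<in> sym_vecs D"
    using X vectorize_carrier[OF X] symmetric_mat_index[OF X]
    by (auto simp: sym_vecs_def vectorize_index)
qed

lemma scalar_prod_vectorize:
  assumes "X \<in> carrier_mat D D" "Y \<in> carrier_mat D D"
  shows "vectorize X \<bullet> vectorize Y = frobenius_inner D X Y"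
proof -
  have blocks: "(\<Sum>k<D * m. g k) = (\<Sum>b<m. \<Sum>a<D. g (a + b * D))" for m and g :: "nat \<Rightarrow> real"
  proof (induction m)
    case (Suc m)
    have "{..<D * Suc m} = {..<D * m} \<union> {D * m..<D * m + D}" by auto
    then have "(\<Sum>k<D * Suc m. g k) = (\<Sum>k<D * m. g k) + (\<Sum>k\<in>{D * m..<D * m + D}. g k)"
      by (simp add: sum.union_disjoint ivl_disj_int)
    also have "(\<Sum>k\<in>{D * m..<D * m + D}. g k) = (\<Sum>a<D. g (a + m * D))"
      using sum.shift_bounds_nat_ivl[of g 0 "D * m" D]
      by (simp add: lessThan_atLeast0 add.commute mult.commute)
    finally show ?case using Suc by simp
  qed simp
  have "vectorize X \<bullet> vectorize Y = (\<Sum>k<D * D. vectorize X $ k * vectorize Y $ k)"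
    using vectorize_carrier[OF assms(2)] by (simp add: scalar_prod_def lessThan_atLeast0)
  also have "\<dots> = (\<Sum>b<D. \<Sum>a<D. X $$ (a,b) * Y $$ (a,b))"
    using assms by (simp add: blocks vectorize_index)
  also have "\<dots> = frobenius_inner D X Y"
    unfolding frobenius_inner_def by (rule sum.swap)
  finally show ?thesis .
qed

lemma sum_triple_swap:
  "(\<Sum>a\<in>A. \<Sum>b\<in>B. \<Sum>c\<in>C. f a b c) = (\<Sum>c\<in>C. \<Sum>b\<in>B. \<Sum>a\<in>A. f a b c)"
proof -
  have "(\<Sum>a\<in>A. \<Sum>b\<in>B. \<Sum>c\<in>C. f a b c) = (\<Sum>a\<in>A. \<Sum>c\<in>C. \<Sum>b\<in>B. f a b c)"
    by (rule sum.cong[OF refl], rule sum.swap)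
  also have "\<dots> = (\<Sum>c\<in>C. \<Sum>a\<in>A. \<Sum>b\<in>B. f a b c)" by (rule sum.swap)
  also have "\<dots> = (\<Sum>c\<in>C. \<Sum>b\<in>B. \<Sum>a\<in>A. f a b c)"
    by (rule sum.cong[OF refl], rule sum.swap)
  finally show ?thesis .
qed

lemma frobenius_inner_mult_left:
  assumes "A \<in> carrier_mat D D" "B \<in> carrier_mat D D" "C \<in> carrier_mat D D"
  shows "frobenius_inner D (A * B) C = frobenius_inner D B (transpose_mat A * C)"
proof -
  have "frobenius_inner D (A * B) C = (\<Sum>a<D. \<Sum>b<D. \<Sum>n<D. A $$ (a,n) * B $$ (n,b) * C $$ (a,b))"
    using assms unfolding frobenius_inner_def
    by (simp add: scalar_prod_def lessThan_atLeast0 sum_distrib_right)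
  also have "\<dots> = (\<Sum>n<D. \<Sum>b<D. \<Sum>a<D. A $$ (a,n) * B $$ (n,b) * C $$ (a,b))"
    by (rule sum_triple_swap)
  also have "\<dots> = frobenius_inner D B (transpose_mat A * C)"
    using assms unfolding frobenius_inner_def
    by (simp add: scalar_prod_def lessThan_atLeast0 sum_distrib_left mult_ac)
  finally show ?thesis .
qed

lemma frobenius_inner_mult_right:
  assumes "A \<in> carrier_mat D D" "B \<in> carrier_mat D D" "C \<in> carrier_mat D D"
  shows "frobenius_inner D (B * A) C = frobenius_inner D B (C * transpose_mat A)"
proof -
  have "frobenius_inner D (B * A) C = (\<Sum>a<D. \<Sum>b<D. \<Sum>n<D. B $$ (a,n) * A $$ (n,b) * C $$ (a,b))"
    using assms unfolding frobenius_inner_def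
    by (simp add: scalar_prod_def lessThan_atLeast0 sum_distrib_right)
  also have "\<dots> = (\<Sum>a<D. \<Sum>n<D. \<Sum>b<D. B $$ (a,n) * A $$ (n,b) * C $$ (a,b))"
    by (rule sum.cong[OF refl], rule sum.swap)
  also have "\<dots> = frobenius_inner D B (C * transpose_mat A)"
    using assms unfolding frobenius_inner_def
    by (simp add: scalar_prod_def lessThan_atLeast0 sum_distrib_left mult_ac)
  finally show ?thesis .
qed

lemma frobenius_inner_congruence:
  assumes R: "R \<in> carrier_mat D D" and B: "B \<in> carrier_mat D D" and Z: "Z \<in> carrier_mat D D"
  shows "frobenius_inner D (R * B * transpose_mat R) Z = frobenius_inner D B (transpose_mat R * Z * R)"
proof -
  have "frobenius_inner D (R * B * transpose_mat R) Z = frobenius_inner D (R * B) (Z * R)"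
    using frobenius_inner_mult_right[of "transpose_mat R" D "R * B" Z] R B Z by simp
  also have "\<dots> = frobenius_inner D B (transpose_mat R * (Z * R))"
    using R B Z by (simp add: frobenius_inner_mult_left)
  also have "transpose_mat R * (Z * R) = transpose_mat R * Z * R"
    using R Z by (simp add: assoc_mult_mat[of _ D D _ D _ D])
  finally show ?thesis .
qed

lemma frobenius_inner_sym_outer:
  assumes u: "u \<in> carrier_vec D" and v: "v \<in> carrier_vec D"
    and X: "X \<in> carrier_mat D D" and sym: "transpose_mat X = X"
  shows "frobenius_inner D (sym_outer u v) X = u \<bullet> (X *\<^sub>v v)"
proof -
  let ?S = "\<lambda>u v. \<Sum>a<D. \<Sum>b<D. u $ a * v $ b * X $$ (a,b)"
  have "frobenius_inner D (sym_outer u v) X = (1/2) * (?S u v + ?S v u)"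
    using u v unfolding frobenius_inner_def sym_outer_def outer_def
    by (simp add: sum_distrib_left sum.distrib algebra_simps)
  also have "?S v u = (\<Sum>b<D. \<Sum>a<D. v $ a * u $ b * X $$ (a,b))" by (rule sum.swap)
  also have "\<dots> = ?S u v"
    using symmetric_mat_index[OF X sym] by (intro sum.cong refl) (simp add: mult_ac)
  also have "(1/2) * (?S u v + ?S u v) = u \<bullet> (X *\<^sub>v v)"
    using u v X by (simp add: scalar_prod_def lessThan_atLeast0 sum_distrib_left mult_ac)
  finally show ?thesis .
qed

lemma vectorize_zero: "vectorize (0\<^sub>m D D :: real mat) = 0\<^sub>v (D * D)"
  unfolding vectorize_def by (intro eq_vecI) (auto simp: index_pair_mod_div)

lemma transpose_unvectorize:
  assumes z: "z \<in> sym_vecs D"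
  shows "transpose_mat (unvectorize D z) = unvectorize D z"
proof -
  have "vectorize (unvectorize D z) \<in> sym_vecs D"
    using z vectorize_unvectorize[of z D] by (simp add: sym_vecs_def)
  then show ?thesis using vectorize_mem_sym_vecs_iff[OF unvectorize_carrier] by blast
qed

lemma vectorize_congruence_sym_outer:
  assumes R: "R \<in> carrier_mat D D" and u: "u \<in> carrier_vec D" and v: "v \<in> carrier_vec D"
  shows "vectorize (R * sym_outer u v * transpose_mat R) \<in> sym_vecs D"
proof -
  have "transpose_mat (R * sym_outer u v * transpose_mat R) = R * sym_outer u v * transpose_mat R"
    using transpose_congruence[of "transpose_mat R" D "sym_outer u v"] R
        sym_outer_carrier_symmetric[OF u v] by simp
  then show ?thesis using R sym_outer_carrier_symmetric[OF u v] vectorize_mem_sym_vecs_iff by simp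
qed

lemma scalar_prod_vectorize_congruence_sym_outer:
  assumes R: "R \<in> carrier_mat D D" and u: "u \<in> carrier_vec D" and v: "v \<in> carrier_vec D"
    and z: "z \<in> sym_vecs D"
  shows "vectorize (R * sym_outer u v * transpose_mat R) \<bullet> z
       = u \<bullet> ((transpose_mat R * unvectorize D z * R) *\<^sub>v v)"
proof -
  let ?Z = "unvectorize D z"
  note B = sym_outer_carrier_symmetric[OF u v]
  have Z: "?Z \<in> carrier_mat D D" "transpose_mat ?Z = ?Z"
    using unvectorize_carrier transpose_unvectorize[OF z] by auto
  have "transpose_mat (transpose_mat R * ?Z * R) = transpose_mat R * ?Z * R"
    using transpose_congruence[OF R Z(1)] Z(2) by simp
  moreover have "vectorize (R * sym_outer u v * transpose_mat R) \<bullet> z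
      = vectorize (R * sym_outer u v * transpose_mat R) \<bullet> vectorize ?Z"
    using z vectorize_unvectorize by (simp add: sym_vecs_def)
  moreover have "R * sym_outer u v * transpose_mat R \<in> carrier_mat D D" using R B by simp
  then have "vectorize (R * sym_outer u v * transpose_mat R) \<bullet> vectorize ?Z
      = frobenius_inner D (sym_outer u v) (transpose_mat R * ?Z * R)"
    by (simp only: scalar_prod_vectorize[OF _ Z(1)] frobenius_inner_congruence[OF R B(1) Z(1)])
  ultimately show ?thesis
    using u v R Z(1) by (simp add: frobenius_inner_sym_outer)
qed

lemma determines_symmetric_iff_no_orthogonal:
  assumes R: "R \<in> carrier_mat D D" "invertible_mat R"
    and pq: "\<And>j. j < J \<Longrightarrow> p j \<in> carrier_vec D \<and> q j \<in> carrier_vec D"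
  shows "determines_symmetric D J p q \<longleftrightarrow>
    (\<forall>z \<in> sym_vecs D. (\<forall>j<J. vectorize (R * sym_outer (p j) (q j) * transpose_mat R) \<bullet> z = 0)
      \<longrightarrow> z = 0\<^sub>v (D * D))"
proof -
  note Ri = invertible_inv_mat[OF R]
  have scalar_prod: "vectorize (R * sym_outer (p j) (q j) * transpose_mat R) \<bullet> z
      = p j \<bullet> ((transpose_mat R * unvectorize D z * R) *\<^sub>v q j)"
    if "j < J" "z \<in> sym_vecs D" for j z
    using scalar_prod_vectorize_congruence_sym_outer[OF R(1)] pq[OF that(1)] that(2) by blast
  show ?thesis
    unfolding determines_symmetric_def
  proof (intro iffI ballI impI)
    fix z assume det: "\<forall>X \<in> carrier_mat D D. transpose_mat X = X \<longrightarrow>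
        (\<forall>j<J. p j \<bullet> (X *\<^sub>v q j) = 0) \<longrightarrow> X = 0\<^sub>m D D"
      and z: "z \<in> sym_vecs D"
      and orth: "\<forall>j<J. vectorize (R * sym_outer (p j) (q j) * transpose_mat R) \<bullet> z = 0"
    let ?Z = "unvectorize D z"
    let ?X = "transpose_mat R * ?Z * R"
    have X: "?X \<in> carrier_mat D D" using R(1) unvectorize_carrier[of D z] by simp
    have X_sym: "transpose_mat ?X = ?X"
      using R(1) unvectorize_carrier transpose_unvectorize[OF z] by (simp add: transpose_congruence)
    have "\<forall>j<J. p j \<bullet> (?X *\<^sub>v q j) = 0"
      using orth scalar_prod z by simp
    then have "?X = 0\<^sub>m D D" using det[rule_format, OF X X_sym] by blast
    moreover have "transpose_mat (inv_mat R) * ?X * inv_mat R = ?Z"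
      by (rule congruence_cancel[OF R(1) Ri(1) unvectorize_carrier Ri(2)])
    ultimately have "?Z = 0\<^sub>m D D" using Ri(1) by simp
    then show "z = 0\<^sub>v (D * D)"
      using vectorize_unvectorize[of z D] z vectorize_zero by (simp add: sym_vecs_def)
  next
    fix X assume orth: "\<forall>z \<in> sym_vecs D.
        (\<forall>j<J. vectorize (R * sym_outer (p j) (q j) * transpose_mat R) \<bullet> z = 0) \<longrightarrow> z = 0\<^sub>v (D * D)"
      and X: "X \<in> carrier_mat D D" "transpose_mat X = X" and vanish: "\<forall>j<J. p j \<bullet> (X *\<^sub>v q j) = 0"
    define Z where "Z = transpose_mat (inv_mat R) * X * inv_mat R"
    have Z: "Z \<in> carrier_mat D D" "transpose_mat Z = Z"
      using Ri(1) X transpose_congruence[OF Ri(1) X(1)] by (auto simp: Z_def)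
    have X_Z: "transpose_mat R * Z * R = X"
      unfolding Z_def by (rule congruence_cancel[OF Ri(1) R(1) X(1) Ri(3)])
    have Z_sym: "vectorize Z \<in> sym_vecs D" using Z vectorize_mem_sym_vecs_iff by blast
    then have "\<forall>j<J. vectorize (R * sym_outer (p j) (q j) * transpose_mat R) \<bullet> vectorize Z = 0"
      using scalar_prod vanish X_Z by (simp add: unvectorize_vectorize[OF Z(1)])
    then have "vectorize Z = 0\<^sub>v (D * D)" using orth[rule_format, OF Z_sym] by blast
    then have "Z = 0\<^sub>m D D"
      using unvectorize_vectorize[OF Z(1)] unvectorize_vectorize[of "0\<^sub>m D D" D] vectorize_zero
      by auto
    then show "X = 0\<^sub>m D D" using X_Z R(1) by simp
  qed
qed

lemma determines_symmetric_iff_rank: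
  assumes R: "R \<in> carrier_mat D D" "invertible_mat R"
    and pq: "\<And>j. j < J \<Longrightarrow> p j \<in> carrier_vec D \<and> q j \<in> carrier_vec D"
  shows "determines_symmetric D J p q \<longleftrightarrow>
    vec_space.rank (D * D) (mat_of_cols (D * D)
      (map (\<lambda>j. vectorize (R * sym_outer (p j) (q j) * transpose_mat R)) [0..<J]))
    = D * (D + 1) div 2"
proof -
  interpret V: cof_vec_space "D * D" "TYPE(real)" .
  let ?vs = "map (\<lambda>j. vectorize (R * sym_outer (p j) (q j) * transpose_mat R)) [0..<J]"
  have "set ?vs \<subseteq> V.span (sym_basis D)"
    using vectorize_congruence_sym_outer[OF R(1)] pq by (auto simp: span_sym_basis)
  from rank_eq_card_iff_no_orthogonal[OF sym_basis_carrier finite_sym_basis lin_indpt_sym_basis this]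
  show ?thesis
    by (simp add: card_sym_basis span_sym_basis determines_symmetric_iff_no_orthogonal[OF R pq]) auto
qed

lemma submatrix_cols_carrier:
  assumes A: "A \<in> carrier_mat n m" and I: "I \<subseteq> {..<m}" "card I = n"
  shows "submatrix A UNIV I \<in> carrier_mat n n"
proof -
  have "{i. i < n \<and> i \<in> (UNIV :: nat set)} = {..<n}" "{j. j < m \<and> j \<in> I} = I"
    using I by auto
  then show ?thesis using A I unfolding submatrix_def by auto
qed

lemma transpose_submatrix_cols_mult:
  assumes A: "A \<in> carrier_mat n m" and B: "B \<in> carrier_mat n m'"
    and I: "I \<subseteq> {..<m}" "card I = n" and L: "L \<subseteq> {..<m'}" "card L = n"
  shows "transpose_mat (submatrix A UNIV I) * submatrix B UNIV L
       = submatrix (transpose_mat A * B) I L"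
proof -
  have rows: "{i. i < n \<and> i \<in> (UNIV :: nat set)} = {..<n}"
    and cols: "{j. j < m \<and> j \<in> I} = I" "{j. j < m' \<and> j \<in> L} = L"
    using I L by auto
  have RA: "submatrix A UNIV I \<in> carrier_mat n n" by (rule submatrix_cols_carrier[OF A I])
  have RB: "submatrix B UNIV L \<in> carrier_mat n n" by (rule submatrix_cols_carrier[OF B L])
  show ?thesis
  proof (rule eq_matI)
    fix i j assume "i < dim_row (submatrix (transpose_mat A * B) I L)"
      "j < dim_col (submatrix (transpose_mat A * B) I L)"
    then have ij: "i < n" "j < n" using A B cols I L by (auto simp: submatrix_def)
    have picks: "pick I i < m" "pick L j < m'"
      using pick_in_set_le[of i I] pick_in_set_le[of j L] ij I L by auto
    have "(transpose_mat (submatrix A UNIV I) * submatrix B UNIV L) $$ (i,j)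
        = (\<Sum>k<n. submatrix A UNIV I $$ (k,i) * submatrix B UNIV L $$ (k,j))"
      using RA RB ij by (simp add: scalar_prod_def lessThan_atLeast0)
    also have "\<dots> = (\<Sum>k<n. A $$ (k, pick I i) * B $$ (k, pick L j))"
      using A B ij rows cols I L by (intro sum.cong refl) (simp add: submatrix_def pick_UNIV)
    also have "\<dots> = submatrix (transpose_mat A * B) I L $$ (i,j)"
      using A B ij picks cols I(2) L(2) by (simp add: submatrix_def scalar_prod_def lessThan_atLeast0)
    finally show "(transpose_mat (submatrix A UNIV I) * submatrix B UNIV L) $$ (i,j)
        = submatrix (transpose_mat A * B) I L $$ (i,j)" .
  qed (use RA RB A B cols in \<open>auto simp: submatrix_def\<close>)
qed

lemma invertible_submatrix_cols:
  assumes A: "A \<in> carrier_mat n m" and B: "B \<in> carrier_mat n m'"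
    and I: "I \<subseteq> {..<m}" "card I = n" and L: "L \<subseteq> {..<m'}" "card L = n"
    and rank: "vec_space.rank n (submatrix (transpose_mat A * B) I L) = n"
  shows "invertible_mat (submatrix A UNIV I :: real mat)" "invertible_mat (submatrix B UNIV L)"
proof -
  note RA = submatrix_cols_carrier[OF A I] and RB = submatrix_cols_carrier[OF B L]
  note prod = transpose_submatrix_cols_mult[OF A B I L]
  have "transpose_mat (submatrix A UNIV I) * submatrix B UNIV L \<in> carrier_mat n n"
    using RA RB by simp
  then have "det (transpose_mat (submatrix A UNIV I) * submatrix B UNIV L) \<noteq> 0"
    using vec_space.det_rank_iff rank prod by metis
  then show "invertible_mat (submatrix A UNIV I)" "invertible_mat (submatrix B UNIV L)"
    using RA RB by (auto simp: invertible_mat_iff_det det_transpose det_mult[of _ n])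
qed

section \<open>The two blocks of a compatible factorisation\<close>

definition block_factor :: "sharp \<Rightarrow> real mat \<Rightarrow> real mat" where
  "block_factor s A = sel s (transpose_mat (inv_mat A)) A"

definition block_gram :: "sharp \<Rightarrow> real mat \<Rightarrow> real mat" where
  "block_gram s A = transpose_mat (block_factor s A) * block_factor s A"

lemma block_factor_invertible:
  assumes "A \<in> carrier_mat n n" "invertible_mat A"
  shows "block_factor s A \<in> carrier_mat n n" "invertible_mat (block_factor s A)"
  using invertible_inv_mat[OF assms] inv_mat_inv_mat[OF assms] assms
  by (cases s; auto simp: block_factor_def invertible_transpose_mat)+

lemma block_factor_surj:
  assumes W: "W \<in> carrier_mat n n" "invertible_mat W"
  obtains A where "A \<in> carrier_mat n n" "invertible_mat A" "block_factor s A = W"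
proof (cases s)
  case St
  note Wi = invertible_inv_mat[OF W]
  have "inv_mat (transpose_mat (inv_mat W)) = transpose_mat W"
    using inv_mat_transpose[OF Wi(1) inv_mat_inv_mat(1)[OF W]] inv_mat_inv_mat(2)[OF W] by simp
  then show ?thesis
    using that[of "transpose_mat (inv_mat W)"] Wi(1) inv_mat_inv_mat(1)[OF W] St
    by (simp add: block_factor_def invertible_transpose_mat)
next
  case Mm
  then show ?thesis using that[OF W] by (simp add: block_factor_def)
qed

lemma block_gram_eq_iff:
  assumes A: "A \<in> carrier_mat n n" "invertible_mat A" and A': "A' \<in> carrier_mat n n" "invertible_mat A'"
  shows "block_gram s A' = block_gram s A \<longleftrightarrow> transpose_mat A' * A' = transpose_mat A * A"
proof (cases s)
  case St
  have gram_inv: "block_gram St X = inv_mat (transpose_mat X * X)"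
    and gram_invertible: "invertible_mat (transpose_mat X * X)"
    if X: "X \<in> carrier_mat n n" "invertible_mat X" for X
  proof -
    note Xi = invertible_inv_mat[OF X]
    have "(transpose_mat X * X) * (inv_mat X * transpose_mat (inv_mat X))
        = transpose_mat X * ((X * inv_mat X) * transpose_mat (inv_mat X))"
      using X Xi(1) by (simp add: assoc_mult_mat[of _ n n _ n _ n])
    also have "\<dots> = transpose_mat X * transpose_mat (inv_mat X)"
      using Xi(1,2) by simp
    also have "\<dots> = transpose_mat (inv_mat X * X)"
      using transpose_mult[OF Xi(1) X(1)] by simp
    also have "\<dots> = 1\<^sub>m n"
      using Xi(3) by simp
    finally have "(transpose_mat X * X) * (inv_mat X * transpose_mat (inv_mat X)) = 1\<^sub>m n" .
    from right_inverse_imp_inv_mat[OF _ _ this] X Xi(1)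
    show "block_gram St X = inv_mat (transpose_mat X * X)" "invertible_mat (transpose_mat X * X)"
      by (auto simp: block_gram_def block_factor_def)
  qed
  show ?thesis
    using St gram_inv[OF A] gram_inv[OF A'] inv_mat_inv_mat(2)[OF _ gram_invertible[OF A]]
      inv_mat_inv_mat(2)[OF _ gram_invertible[OF A']] A(1) A'(1)
    by (metis transpose_carrier_mat mult_carrier_mat)
qed (simp add: block_gram_def block_factor_def)

lemma compatible_iff_block_gram:
  assumes P0: "P0st \<in> carrier_mat D W" "P0m \<in> carrier_mat D M" "transpose_mat P0st * P0m = Dm"
    and theta: "\<forall>j<J. fst (\<theta> j) < sel s W M \<and> snd (\<theta> j) < sel s W M"
    and A: "A \<in> carrier_mat D D" "invertible_mat A"
  shows "compatible D W M Dm s J \<theta> c (transpose_mat (inv_mat A) * P0st) (A * P0m) \<longleftrightarrow>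
    (\<forall>j<J. col (sel s P0st P0m) (fst (\<theta> j)) \<bullet>
             (block_gram s A *\<^sub>v col (sel s P0st P0m) (snd (\<theta> j))) = c j)"
proof -
  note Ai = invertible_inv_mat[OF A]
  have "transpose_mat (transpose_mat (inv_mat A) * P0st) * (A * P0m)
      = transpose_mat P0st * ((inv_mat A * A) * P0m)"
    using P0 A Ai(1)
    by (simp add: transpose_mult[of _ D D _ W] assoc_mult_mat[of _ W D _ D _ M]
        assoc_mult_mat[of _ D D _ D _ M])
  then have product: "transpose_mat (transpose_mat (inv_mat A) * P0st) * (A * P0m) = Dm"
    using Ai(3) P0 by simp
  have block: "sel s (transpose_mat (inv_mat A) * P0st) (A * P0m) = block_factor s A * sel s P0st P0m"
    by (cases s) (simp_all add: block_factor_def)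
  have P0s: "sel s P0st P0m \<in> carrier_mat D (sel s W M)" using P0 by (cases s) auto
  have entry: "(transpose_mat (block_factor s A * sel s P0st P0m)
        * (block_factor s A * sel s P0st P0m)) $$ \<theta> j
      = col (sel s P0st P0m) (fst (\<theta> j)) \<bullet> (block_gram s A *\<^sub>v col (sel s P0st P0m) (snd (\<theta> j)))"
    if "j < J" for j
    using gram_mult_index[OF block_factor_invertible(1)[OF A] P0s, of "fst (\<theta> j)" "snd (\<theta> j)"]
      theta that
    by (simp add: block_gram_def)
  show ?thesis
    unfolding compatible_def block using product entry Ai(1) P0 A by auto
qed

lemma unique_transpose_mult_iff_unique_block_gram:
  assumes A: "A \<in> carrier_mat n n" "invertible_mat A"
  shows "(\<forall>A'. A' \<in> carrier_mat n n \<and> invertible_mat A' \<and> Q (block_gram s A') \<longrightarrow>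
            transpose_mat A' * A' = transpose_mat A * A) \<longleftrightarrow>
         (\<forall>W \<in> carrier_mat n n. invertible_mat W \<longrightarrow> Q (transpose_mat W * W) \<longrightarrow>
            transpose_mat W * W = block_gram s A)"
proof (intro iffI)
  assume unique: "\<forall>A'. A' \<in> carrier_mat n n \<and> invertible_mat A' \<and> Q (block_gram s A') \<longrightarrow>
      transpose_mat A' * A' = transpose_mat A * A"
  show "\<forall>W \<in> carrier_mat n n. invertible_mat W \<longrightarrow> Q (transpose_mat W * W) \<longrightarrow>
      transpose_mat W * W = block_gram s A"
  proof (intro ballI impI)
    fix W assume W: "W \<in> carrier_mat n n" "invertible_mat W" and Q: "Q (transpose_mat W * W)"
    obtain A' where A': "A' \<in> carrier_mat n n" "invertible_mat A'" "block_factor s A' = W"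
      using block_factor_surj[OF W] by blast
    then have "transpose_mat A' * A' = transpose_mat A * A"
      using unique Q by (simp add: block_gram_def)
    then have "block_gram s A' = block_gram s A"
      using block_gram_eq_iff[OF A A'(1,2)] by simp
    then show "transpose_mat W * W = block_gram s A" using A'(3) by (simp add: block_gram_def)
  qed
next
  assume unique: "\<forall>W \<in> carrier_mat n n. invertible_mat W \<longrightarrow> Q (transpose_mat W * W) \<longrightarrow>
      transpose_mat W * W = block_gram s A"
  show "\<forall>A'. A' \<in> carrier_mat n n \<and> invertible_mat A' \<and> Q (block_gram s A') \<longrightarrow>
      transpose_mat A' * A' = transpose_mat A * A"
  proof (intro allI impI, elim conjE)
    fix A' assume A': "A' \<in> carrier_mat n n" "invertible_mat A'" "Q (block_gram s A')"
    then have "block_gram s A' = block_gram s A"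
      using block_factor_invertible[OF A'(1,2)] unique by (simp add: block_gram_def)
    then show "transpose_mat A' * A' = transpose_mat A * A"
      using block_gram_eq_iff[OF A A'(1,2)] by simp
  qed
qed

lemma unique_AtA_iff_determines_symmetric:
  assumes P0: "P0st \<in> carrier_mat D W" "P0m \<in> carrier_mat D M" "transpose_mat P0st * P0m = Dm"
    and theta: "\<forall>j<J. fst (\<theta> j) < sel s W M \<and> snd (\<theta> j) < sel s W M"
    and A: "A \<in> carrier_mat D D" "invertible_mat A"
    and P: "compatible D W M Dm s J \<theta> c (transpose_mat (inv_mat A) * P0st) (A * P0m)"
  shows "(\<forall>A'. A' \<in> carrier_mat D D \<and> invertible_mat A' \<and>
            compatible D W M Dm s J \<theta> c (transpose_mat (inv_mat A') * P0st) (A' * P0m)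
            \<longrightarrow> transpose_mat A' * A' = transpose_mat A * A) \<longleftrightarrow>
         determines_symmetric D J (\<lambda>j. col (sel s P0st P0m) (fst (\<theta> j)))
           (\<lambda>j. col (sel s P0st P0m) (snd (\<theta> j)))"
    (is "_ \<longleftrightarrow> determines_symmetric D J ?p ?q")
proof -
  define Q where "Q G \<longleftrightarrow> (\<forall>j<J. ?p j \<bullet> (G *\<^sub>v ?q j) = c j)" for G
  define F where "F = block_factor s A"
  have F: "F \<in> carrier_mat D D" "invertible_mat F"
    unfolding F_def by (rule block_factor_invertible[OF A])+
  have pq: "?p j \<in> carrier_vec D \<and> ?q j \<in> carrier_vec D" if "j < J" for j
    using theta that P0 by (cases s) auto
  note compat = compatible_iff_block_gram[OF P0 theta]
  have c: "c j = ?p j \<bullet> ((transpose_mat F * F) *\<^sub>v ?q j)" if "j < J" for j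
    using P compat[OF A] that by (simp add: F_def block_gram_def)
  have "(\<forall>A'. A' \<in> carrier_mat D D \<and> invertible_mat A' \<and>
            compatible D W M Dm s J \<theta> c (transpose_mat (inv_mat A') * P0st) (A' * P0m)
            \<longrightarrow> transpose_mat A' * A' = transpose_mat A * A) \<longleftrightarrow>
        (\<forall>A'. A' \<in> carrier_mat D D \<and> invertible_mat A' \<and> Q (block_gram s A')
            \<longrightarrow> transpose_mat A' * A' = transpose_mat A * A)"
    using compat unfolding Q_def by blast
  also have "\<dots> \<longleftrightarrow> (\<forall>X \<in> carrier_mat D D. invertible_mat X \<longrightarrow> Q (transpose_mat X * X) \<longrightarrow>
      transpose_mat X * X = block_gram s A)"
    by (rule unique_transpose_mult_iff_unique_block_gram[OF A])
  also have "\<dots> \<longleftrightarrow> (\<forall>X \<in> carrier_mat D D. invertible_mat X \<longrightarrow>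
      (\<forall>j<J. ?p j \<bullet> ((transpose_mat X * X) *\<^sub>v ?q j) = ?p j \<bullet> ((transpose_mat F * F) *\<^sub>v ?q j)) \<longrightarrow>
      transpose_mat X * X = transpose_mat F * F)"
    unfolding Q_def using c by (simp add: F_def block_gram_def)
  also have "\<dots> \<longleftrightarrow> determines_symmetric D J ?p ?q"
    by (rule unique_gram_iff_determines_symmetric[OF F pq])
  finally show ?thesis .
qed

theorem lemma3:
  fixes D W V K J :: nat
    and Dm P0st P0m A :: "real mat"
    and I L :: "nat set"
    and s :: sharp
    and \<theta> :: "nat \<Rightarrow> nat \<times> nat"
    and c :: "nat \<Rightarrow> real"
  assumes pos: "0 < D" "0 < W" "0 < V" "0 < K"
    and Dm: "Dm \<in> carrier_mat W (V * K)" "vec_space.rank W Dm = D"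
    and I: "I \<subseteq> {..<W}" "card I = D"
    and L: "L \<subseteq> {..<V * K}" "card L = D"
    and Dsq: "vec_space.rank D (submatrix Dm I L) = D"
    and theta: "\<forall>j<J. fst (\<theta> j) < sel s W (V * K) \<and> snd (\<theta> j) < sel s W (V * K)"
    and P0: "P0st \<in> carrier_mat D W" "P0m \<in> carrier_mat D (V * K)"
            "transpose_mat P0st * P0m = Dm"
    and A: "A \<in> carrier_mat D D" "invertible_mat A"
    and P: "compatible D W (V * K) Dm s J \<theta> c
              (transpose_mat (inv_mat A) * P0st) (A * P0m)"
  shows "(\<forall>A'. A' \<in> carrier_mat D D \<and> invertible_mat A' \<and>
            compatible D W (V * K) Dm s J \<theta> c
              (transpose_mat (inv_mat A') * P0st) (A' * P0m)
            \<longrightarrow> transpose_mat A' * A' = transpose_mat A * A)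
         \<longleftrightarrow>
         (let R = sel (other s) (submatrix P0st UNIV I) (submatrix P0m UNIV L);
              p = (\<lambda>i. col (sel s P0st P0m) i);
              B = (\<lambda>j. (1/2::real) \<cdot>\<^sub>m (outer (p (fst (\<theta> j))) (p (snd (\<theta> j)))
                                     + outer (p (snd (\<theta> j))) (p (fst (\<theta> j)))))
          in vec_space.rank (D * D)
               (mat_of_cols (D * D) (map (\<lambda>j. vectorize (R * B j * transpose_mat R)) [0..<J]))
             = D * (D + 1) div 2)"
proof -
  let ?p = "\<lambda>j. col (sel s P0st P0m) (fst (\<theta> j))"
  let ?q = "\<lambda>j. col (sel s P0st P0m) (snd (\<theta> j))"
  have pq: "?p j \<in> carrier_vec D \<and> ?q j \<in> carrier_vec D" if "j < J" for j
    using theta that P0 by (cases s) auto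
  have "invertible_mat (submatrix P0st UNIV I)" "invertible_mat (submatrix P0m UNIV L)"
    using invertible_submatrix_cols[OF P0(1,2) I L] Dsq P0(3) by auto
  then have R: "sel (other s) (submatrix P0st UNIV I) (submatrix P0m UNIV L) \<in> carrier_mat D D"
    "invertible_mat (sel (other s) (submatrix P0st UNIV I) (submatrix P0m UNIV L))"
    using submatrix_cols_carrier[OF P0(1) I] submatrix_cols_carrier[OF P0(2) L]
    by (cases s; simp)+
  show ?thesis
    using unique_AtA_iff_determines_symmetric[OF P0 theta A P] determines_symmetric_iff_rank[OF R pq]
    by (simp add: Let_def sym_outer_def)
qed

end
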